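(* Let $\mathcal{X}=\mathcal{X}_1\times\cdots\times\mathcal{X}_n$ and $\mathcal{Y}=\mathcal{Y}_1\times\cdots\times\mathcal{Y}_m$ be finite sets, and let $k\in\{1,\ldots,n\}$. Let $\mathcal{P}$ be the partition model on $\mathcal{X}$ whose blocks are the sets $\{x_1\}\times\cdots\times\{x_k\}\times\mathcal{X}_{k+1}\times\cdots\times\mathcal{X}_n$ for all $(x_1,\ldots,x_k)\in\mathcal{X}_1\times\cdots\times\mathcal{X}_k$. If $$1+\sum_{j\in[m]}(|\mathcal{Y}_j|-1)\;\geq\;\Big(\prod_{i\in[k]}|\mathcal{X}_i|\Big)\Big/\max_{j\in[k]}|\mathcal{X}_j|,$$ then every distribution contained in $\mathcal{P}$ can be approximated arbitrarily well by distributions from $\operatorname{RBM}_{\mathcal{X},\mathcal{Y}}$ (i.e., $\mathcal{P}$ is contained in the topological closure of $\operatorname{RBM}_{\mathcal{X},\mathcal{Y}}$).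
   Context: For a finite product set $\mathcal{Z}=\mathcal{Z}_1\times\cdots\times\mathcal{Z}_k$, fix in each $\mathcal{Z}_i$ a reference state $z_i^0$ and let $F^{\mathcal{Z}}(z)=\big(1,(\mathbb{1}[z_i=a])_{i\in[k],\,a\in\mathcal{Z}_i\setminus\{z_i^0\}}\big)^\top$ be the sufficient statistics of the independence model on $\mathcal{Z}$. The restricted Boltzmann machine model $\operatorname{RBM}_{\mathcal{X},\mathcal{Y}}$ with visible states $\mathcal{X}$ and hidden states $\mathcal{Y}$ is the set of probability distributions on $\mathcal{X}$ of the form $p(x)=\frac{1}{Z(\Theta)}\sum_{y\in\mathcal{Y}}\exp\big(F^{\mathcal{X}}(x)^\top\Theta F^{\mathcal{Y}}(y)\big)$, $x\in\mathcal{X}$, for all real matrices $\Theta$ of the appropriate size, where $Z(\Theta)$ is the normalizing constant (i.e., the visible marginals of the exponential family on $\mathcal{X}\times\mathcal{Y}$ with sufficient statistics $F^{\mathcal{X}}(x)\otimes F^{\mathcal{Y}}(y)$). Given disjoint nonempty sets $A_1,\ldots,A_K\subseteq\mathcal{X}$ covering $\mathcal{X}$, the partition model with these blocks is the set of all mixtures $\sum_{k}\lambda_k u_{A_k}$ with $\lambda_k\ge 0$, $\sum_k\lambda_k=1$, where $u_{A_k}$ is the uniform distribution on $A_k$. *)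

theory Defs
  imports Complex_Main "HOL-Library.FuncSet"
begin

text \<open>A finite product set Z_1 x ... x Z_r is represented as PiE {..<r} Z, i.e. states
  are functions z with z i \<in> Z i for i < r (and undefined elsewhere).
  z0 i is the reference state of Z i.\<close>

text \<open>Index set of the sufficient statistics F^Z: None is the constant entry 1,
  Some (i,a) the indicator of z_i = a, for i < r and a \<in> Z i - {z0 i}.\<close>
definition stat_index :: "(nat \<Rightarrow> 'a set) \<Rightarrow> (nat \<Rightarrow> 'a) \<Rightarrow> nat \<Rightarrow> (nat \<times> 'a) option set" where
  "stat_index Z z0 r = insert None (Some ` {(i, a). i < r \<and> a \<in> Z i \<and> a \<noteq> z0 i})"

definition suff_stat :: "(nat \<Rightarrow> 'a) \<Rightarrow> (nat \<times> 'a) option \<Rightarrow> real" where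
  "suff_stat z s = (case s of None \<Rightarrow> 1 | Some (i, a) \<Rightarrow> (if z i = a then 1 else 0))"

definition rbm_energy ::
  "(nat \<Rightarrow> 'a set) \<Rightarrow> (nat \<Rightarrow> 'a) \<Rightarrow> nat \<Rightarrow> (nat \<Rightarrow> 'b set) \<Rightarrow> (nat \<Rightarrow> 'b) \<Rightarrow> nat
   \<Rightarrow> ((nat \<times> 'a) option \<Rightarrow> (nat \<times> 'b) option \<Rightarrow> real) \<Rightarrow> (nat \<Rightarrow> 'a) \<Rightarrow> (nat \<Rightarrow> 'b) \<Rightarrow> real" where
  "rbm_energy X x0 n Y y0 m \<Theta> x y =
     (\<Sum>s\<in>stat_index X x0 n. \<Sum>t\<in>stat_index Y y0 m. suff_stat x s * \<Theta> s t * suff_stat y t)"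

definition rbm_dist ::
  "(nat \<Rightarrow> 'a set) \<Rightarrow> (nat \<Rightarrow> 'a) \<Rightarrow> nat \<Rightarrow> (nat \<Rightarrow> 'b set) \<Rightarrow> (nat \<Rightarrow> 'b) \<Rightarrow> nat
   \<Rightarrow> ((nat \<times> 'a) option \<Rightarrow> (nat \<times> 'b) option \<Rightarrow> real) \<Rightarrow> (nat \<Rightarrow> 'a) \<Rightarrow> real" where
  "rbm_dist X x0 n Y y0 m \<Theta> x =
     (\<Sum>y\<in>PiE {..<m} Y. exp (rbm_energy X x0 n Y y0 m \<Theta> x y)) /
     (\<Sum>x'\<in>PiE {..<n} X. \<Sum>y\<in>PiE {..<m} Y. exp (rbm_energy X x0 n Y y0 m \<Theta> x' y))"

text \<open>The RBM model, as a set of distributions (functions on states; only their values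
  on PiE {..<n} X matter).\<close>
definition RBM ::
  "(nat \<Rightarrow> 'a set) \<Rightarrow> (nat \<Rightarrow> 'a) \<Rightarrow> nat \<Rightarrow> (nat \<Rightarrow> 'b set) \<Rightarrow> (nat \<Rightarrow> 'b) \<Rightarrow> nat
   \<Rightarrow> ((nat \<Rightarrow> 'a) \<Rightarrow> real) set" where
  "RBM X x0 n Y y0 m = {p. \<exists>\<Theta>. p = rbm_dist X x0 n Y y0 m \<Theta>}"

definition partition_model :: "'x set set \<Rightarrow> ('x \<Rightarrow> real) set" where
  "partition_model Bs = {p. \<exists>w. (\<forall>A\<in>Bs. w A \<ge> 0) \<and> (\<Sum>A\<in>Bs. w A) = 1 \<and>
      p = (\<lambda>x. \<Sum>A\<in>Bs. w A * (if x \<in> A then 1 / real (card A) else 0))}"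

definition prefix_blocks :: "(nat \<Rightarrow> 'a set) \<Rightarrow> nat \<Rightarrow> nat \<Rightarrow> (nat \<Rightarrow> 'a) set set" where
  "prefix_blocks X n k = (\<lambda>u. {x \<in> PiE {..<n} X. \<forall>i<k. x i = u i}) ` PiE {..<k} X"

definition approx_by :: "'x set \<Rightarrow> ('x \<Rightarrow> real) set \<Rightarrow> ('x \<Rightarrow> real) \<Rightarrow> bool" where
  "approx_by S M p \<longleftrightarrow> (\<forall>\<epsilon>>0. \<exists>q\<in>M. \<forall>x\<in>S. \<bar>p x - q x\<bar> < \<epsilon>)"

end

theory Submission
  imports Defs
begin

text \<open>
  Let l < k be a coordinate with the largest X l among the first k, and I = {..<k} - {l}.
  The hypothesis says exactly that the hidden layer has at least as many sufficient statistics
  as there are assignments v of the coordinates in I, so every v gets its own statistic \<sigma> v.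
  A distribution p of the partition model depends only on the coordinates in I and on x l.
  For large T, the column of \<Theta> belonging to \<sigma> v is chosen as
  ln (max (p (v, x l)) (exp (- T))) minus a multiple of T times the number of i \<in> I with
  x i \<noteq> v i. This is a sum of functions of single coordinates, hence a linear combination of
  the visible statistics. For each visible x, the hidden state switching on \<sigma> applied to the
  restriction of x to I then has energy close to ln (p x), and every other hidden state has
  energy at most - T. So the unnormalized visible marginal is within
  (1 + number of hidden states) * exp (- T) of p, and normalizing preserves the approximation.
\<close>

section \<open>Sufficient statistics\<close>

lemma sum_suff_stat:
  assumes "\<And>i. i < r \<Longrightarrow> finite (Z i)" and "z \<in> PiE {..<r} Z"
  shows "(\<Sum>s\<in>stat_index Z z0 r. suff_stat z s * w s)
         = w None + (\<Sum>i<r. if z i \<noteq> z0 i then w (Some (i, z i)) else 0)"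
proof -
  have Sigma: "{(i, a). i < r \<and> a \<in> Z i \<and> a \<noteq> z0 i} = Sigma {..<r} (\<lambda>i. Z i - {z0 i})"
    by auto
  have "finite (Sigma {..<r} (\<lambda>i. Z i - {z0 i}))"
    using assms(1) by auto
  then have "(\<Sum>s\<in>stat_index Z z0 r. suff_stat z s * w s)
        = w None + (\<Sum>(i, a)\<in>Sigma {..<r} (\<lambda>i. Z i - {z0 i}). suff_stat z (Some (i, a)) * w (Some (i, a)))"
    unfolding stat_index_def Sigma
    by (simp add: sum.reindex suff_stat_def case_prod_unfold)
  also have "\<dots> = w None + (\<Sum>i<r. \<Sum>a\<in>Z i - {z0 i}. if z i = a then w (Some (i, a)) else 0)"
    using assms(1) by (subst sum.Sigma) (auto simp: suff_stat_def intro!: sum.cong split: if_split_asm)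
  also have "\<dots> = w None + (\<Sum>i<r. if z i \<noteq> z0 i then w (Some (i, z i)) else 0)"
    using assms by (intro arg_cong2[where f = "(+)"] sum.cong) (auto simp: PiE_iff)
  finally show ?thesis .
qed

lemma card_stat_index:
  assumes "\<And>j. j < m \<Longrightarrow> finite (Y j)" and "\<And>j. j < m \<Longrightarrow> y0 j \<in> Y j"
  shows "finite (stat_index Y y0 m)"
    and "real (card (stat_index Y y0 m)) = 1 + (\<Sum>j<m. (real (card (Y j)) - 1))"
proof -
  have Sigma: "{(j, b). j < m \<and> b \<in> Y j \<and> b \<noteq> y0 j} = Sigma {..<m} (\<lambda>j. Y j - {y0 j})"
    by auto
  show "finite (stat_index Y y0 m)"
    unfolding stat_index_def Sigma using assms(1) by auto
  have "card (stat_index Y y0 m) = Suc (card (Sigma {..<m} (\<lambda>j. Y j - {y0 j})))"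
    unfolding stat_index_def Sigma using assms(1) by (subst card_insert_disjoint) (auto simp: card_image)
  also have "card (Sigma {..<m} (\<lambda>j. Y j - {y0 j})) = (\<Sum>j<m. card (Y j - {y0 j}))"
    using assms(1) by (subst card_SigmaI) auto
  finally have "card (stat_index Y y0 m) = Suc (\<Sum>j<m. card (Y j - {y0 j}))" .
  moreover have "real (card (Y j - {y0 j})) = real (card (Y j)) - 1" if "j < m" for j
  proof -
    have "1 \<le> card (Y j)"
      using assms that by (auto simp: Suc_le_eq card_gt_0_iff)
    then show ?thesis
      using assms that by (simp add: of_nat_diff)
  qed
  ultimately show "real (card (stat_index Y y0 m)) = 1 + (\<Sum>j<m. (real (card (Y j)) - 1))"
    by simp
qed

definition coord_additive :: "nat \<Rightarrow> (nat \<Rightarrow> 'a set) \<Rightarrow> ((nat \<Rightarrow> 'a) \<Rightarrow> real) \<Rightarrow> bool" where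
  "coord_additive n X \<phi> \<longleftrightarrow> (\<exists>c h. \<forall>x\<in>PiE {..<n} X. \<phi> x = c + (\<Sum>i<n. h i (x i)))"

lemma coord_additive_const: "coord_additive n X (\<lambda>x. c)"
  unfolding coord_additive_def by (intro exI[of _ c] exI[of _ "\<lambda>i a. 0"]) simp

lemma coord_additive_sum:
  assumes "I \<subseteq> {..<n}"
  shows "coord_additive n X (\<lambda>x. \<Sum>i\<in>I. g i (x i))"
proof -
  have "(\<Sum>i\<in>I. g i (x i)) = (\<Sum>i<n. if i \<in> I then g i (x i) else 0)" for x
    using assms by (simp add: sum.inter_restrict[symmetric] Int_absorb1)
  then show ?thesis
    unfolding coord_additive_def by (intro exI[of _ 0] exI[of _ "\<lambda>i a. if i \<in> I then g i a else 0"]) simp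
qed

lemma coord_additive_coord: "l < n \<Longrightarrow> coord_additive n X (\<lambda>x. g (x l))"
  using coord_additive_sum[of "{l}" n X "\<lambda>i. g"] by simp

lemma coord_additive_diff:
  assumes "coord_additive n X \<phi>" and "coord_additive n X \<psi>"
  shows "coord_additive n X (\<lambda>x. \<phi> x - \<psi> x)"
proof -
  obtain c h d g where "\<forall>x\<in>PiE {..<n} X. \<phi> x = c + (\<Sum>i<n. h i (x i))"
    and "\<forall>x\<in>PiE {..<n} X. \<psi> x = d + (\<Sum>i<n. g i (x i))"
    using assms unfolding coord_additive_def by blast
  then show ?thesis
    unfolding coord_additive_def
    by (intro exI[of _ "c - d"] exI[of _ "\<lambda>i a. h i a - g i a"]) (simp add: sum_subtractf)
qed

lemma coord_additive_imp_stat_combination: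
  assumes "\<And>i. i < n \<Longrightarrow> finite (X i)" and "coord_additive n X \<phi>"
  obtains w where "\<And>x. x \<in> PiE {..<n} X \<Longrightarrow> (\<Sum>s\<in>stat_index X x0 n. suff_stat x s * w s) = \<phi> x"
proof -
  obtain c h where \<phi>: "\<forall>x\<in>PiE {..<n} X. \<phi> x = c + (\<Sum>i<n. h i (x i))"
    using assms(2) unfolding coord_additive_def by blast
  define w where "w s = (case s of None \<Rightarrow> c + (\<Sum>i<n. h i (x0 i)) | Some (i, a) \<Rightarrow> h i a - h i (x0 i))"
    for s
  have "(\<Sum>s\<in>stat_index X x0 n. suff_stat x s * w s) = \<phi> x" if x: "x \<in> PiE {..<n} X" for x
  proof -
    have "(\<Sum>i<n. if x i \<noteq> x0 i then w (Some (i, x i)) else 0) = (\<Sum>i<n. h i (x i) - h i (x0 i))"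
      by (rule sum.cong) (auto simp: w_def)
    moreover have "w None = c + (\<Sum>i<n. h i (x0 i))"
      by (simp add: w_def)
    ultimately show ?thesis
      using \<phi> x by (simp add: sum_suff_stat[OF assms(1) x] sum_subtractf)
  qed
  then show ?thesis by (rule that)
qed

section \<open>Energies of hidden states\<close>

text \<open>hidden_energy y0 m \<theta> y is F^Y(y)^T \<theta> (see sum_suff_stat).\<close>
definition hidden_energy ::
  "(nat \<Rightarrow> 'b) \<Rightarrow> nat \<Rightarrow> ((nat \<times> 'b) option \<Rightarrow> real) \<Rightarrow> (nat \<Rightarrow> 'b) \<Rightarrow> real" where
  "hidden_energy y0 m \<theta> y = \<theta> None + (\<Sum>j<m. if y j \<noteq> y0 j then \<theta> (Some (j, y j)) else 0)"

lemma rbm_energy_from_columns: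
  assumes "\<And>i. i < n \<Longrightarrow> finite (X i)" and "\<And>j. j < m \<Longrightarrow> finite (Y j)"
    and "\<And>t. coord_additive n X (\<theta> t)"
  obtains \<Theta> where "\<And>x y. x \<in> PiE {..<n} X \<Longrightarrow> y \<in> PiE {..<m} Y \<Longrightarrow>
      rbm_energy X x0 n Y y0 m \<Theta> x y = hidden_energy y0 m (\<lambda>t. \<theta> t x) y"
proof -
  have "\<forall>t. \<exists>w. \<forall>x\<in>PiE {..<n} X. (\<Sum>s\<in>stat_index X x0 n. suff_stat x s * w s) = \<theta> t x"
    using coord_additive_imp_stat_combination[OF assms(1,3)] by metis
  then obtain W where W: "\<And>t x. x \<in> PiE {..<n} X \<Longrightarrow>
      (\<Sum>s\<in>stat_index X x0 n. suff_stat x s * W t s) = \<theta> t x"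
    by metis
  have "rbm_energy X x0 n Y y0 m (\<lambda>s t. W t s) x y = hidden_energy y0 m (\<lambda>t. \<theta> t x) y"
    if x: "x \<in> PiE {..<n} X" and y: "y \<in> PiE {..<m} Y" for x y
  proof -
    have "rbm_energy X x0 n Y y0 m (\<lambda>s t. W t s) x y
        = (\<Sum>t\<in>stat_index Y y0 m. suff_stat y t * (\<Sum>s\<in>stat_index X x0 n. suff_stat x s * W t s))"
      unfolding rbm_energy_def
      by (subst sum.swap) (simp add: sum_distrib_left mult.commute mult.left_commute)
    then show ?thesis
      by (simp add: W[OF x] sum_suff_stat[OF assms(2) y] hidden_energy_def)
  qed
  then show ?thesis by (rule that)
qed

lemma sum_le_member_if_nonpos:
  fixes g :: "'i \<Rightarrow> real"
  assumes "finite J" and "j \<in> J" and "\<And>i. i \<in> J \<Longrightarrow> g i \<le> 0"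
  shows "sum g J \<le> g j"
proof -
  have "sum g (J - {j}) \<le> 0"
    using assms(3) by (intro sum_nonpos) auto
  then show ?thesis
    using sum.remove[OF assms(1,2), of g] by linarith
qed

lemma hidden_term_bounds:
  fixes \<theta> :: "(nat \<times> 'b) option \<Rightarrow> real"
  assumes "y \<in> PiE {..<m} Y" and "j < m" and "Some (j, y j) \<noteq> c0" and "0 \<le> T"
    and "\<And>c. c \<in> stat_index Y y0 m \<Longrightarrow> c \<noteq> None \<Longrightarrow> c \<noteq> c0 \<Longrightarrow> \<theta> c \<le> - T"
  shows "(if y j \<noteq> y0 j then \<theta> (Some (j, y j)) else 0) \<le> 0"
    and "y j \<noteq> y0 j \<Longrightarrow> \<theta> (Some (j, y j)) \<le> - T"
proof -
  have "y j \<noteq> y0 j \<Longrightarrow> Some (j, y j) \<in> stat_index Y y0 m"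
    using assms(1,2) by (auto simp: stat_index_def)
  then show gap: "y j \<noteq> y0 j \<Longrightarrow> \<theta> (Some (j, y j)) \<le> - T"
    using assms(3,5) by blast
  show "(if y j \<noteq> y0 j then \<theta> (Some (j, y j)) else 0) \<le> 0"
    using gap assms(4) by (cases "y j = y0 j") auto
qed

lemma hidden_energy_gap_reference:
  assumes "0 \<le> T" and "\<theta> None \<le> 0"
    and "\<And>c. c \<in> stat_index Y y0 m \<Longrightarrow> c \<noteq> None \<Longrightarrow> \<theta> c \<le> - T"
    and y: "y \<in> PiE {..<m} Y" "y \<noteq> restrict y0 {..<m}"
  shows "hidden_energy y0 m \<theta> y \<le> - T"
proof -
  obtain j where j: "j < m" "y j \<noteq> y0 j"
    using y by (auto simp: PiE_iff extensional_def fun_eq_iff split: if_split_asm)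
  define t where "t i = (if y i \<noteq> y0 i then \<theta> (Some (i, y i)) else 0)" for i
  have bounds: "t i \<le> 0" "y i \<noteq> y0 i \<Longrightarrow> t i \<le> - T" if "i < m" for i
    using hidden_term_bounds[where ?c0.0 = None and \<theta> = \<theta>, OF y(1) that] assms(1,3)
    by (auto simp: t_def)
  have "(\<Sum>i<m. t i) \<le> t j"
    using j bounds by (intro sum_le_member_if_nonpos) auto
  also have "t j \<le> - T"
    using j bounds by auto
  finally show ?thesis
    using assms(2) by (simp add: hidden_energy_def t_def)
qed

lemma hidden_energy_gap_unit:
  assumes "0 \<le> T" and j0: "j0 < m" and "b0 \<noteq> y0 j0"
    and "\<theta> None + \<theta> (Some (j0, b0)) \<le> 0" and "\<theta> None \<le> - T"
    and "\<And>c. c \<in> stat_index Y y0 m \<Longrightarrow> c \<noteq> None \<Longrightarrow> c \<noteq> Some (j0, b0) \<Longrightarrow> \<theta> c \<le> - T"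
    and y: "y \<in> PiE {..<m} Y" "y \<noteq> (restrict y0 {..<m})(j0 := b0)"
  shows "hidden_energy y0 m \<theta> y \<le> - T"
proof -
  define t where "t i = (if y i \<noteq> y0 i then \<theta> (Some (i, y i)) else 0)" for i
  have bounds: "t i \<le> 0" "y i \<noteq> y0 i \<Longrightarrow> t i \<le> - T" if "i < m" "Some (i, y i) \<noteq> Some (j0, b0)" for i
    using hidden_term_bounds[where \<theta> = \<theta>, OF y(1) that assms(1)] assms(6) by (auto simp: t_def)
  show ?thesis
  proof (cases "y j0 = b0")
    case True
    obtain j where j: "j < m" "j \<noteq> j0" "y j \<noteq> y0 j"
      using y True by (auto simp: PiE_iff extensional_def fun_eq_iff split: if_split_asm)
    have "(\<Sum>i<m. t i) = t j0 + (\<Sum>i\<in>{..<m} - {j0}. t i)"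
      using j0 by (intro sum.remove) auto
    also have "(\<Sum>i\<in>{..<m} - {j0}. t i) \<le> t j"
      using j bounds by (intro sum_le_member_if_nonpos) auto
    also have "t j \<le> - T"
      using j bounds by auto
    finally show ?thesis
      using True assms(3,4) by (simp add: hidden_energy_def t_def)
  next
    case False
    have "(\<Sum>i<m. t i) \<le> 0"
      using False bounds by (intro sum_nonpos) auto
    then show ?thesis
      using assms(5) by (simp add: hidden_energy_def t_def)
  qed
qed

lemma hidden_energy_gap:
  fixes \<theta> :: "(nat \<times> 'b) option \<Rightarrow> real"
  assumes y0: "\<And>j. j < m \<Longrightarrow> y0 j \<in> Y j" and c0: "c0 \<in> stat_index Y y0 m" and "0 \<le> T"
    and None_nonpos: "\<theta> None \<le> 0"
    and selected_nonpos: "\<theta> None + (if c0 = None then 0 else \<theta> c0) \<le> 0"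
    and None_gap: "c0 \<noteq> None \<Longrightarrow> \<theta> None \<le> - T"
    and Some_gap: "\<And>c. c \<in> stat_index Y y0 m \<Longrightarrow> c \<noteq> None \<Longrightarrow> c \<noteq> c0 \<Longrightarrow> \<theta> c \<le> - T"
  obtains y' where "y' \<in> PiE {..<m} Y"
    and "hidden_energy y0 m \<theta> y' = \<theta> None + (if c0 = None then 0 else \<theta> c0)"
    and "\<And>y. y \<in> PiE {..<m} Y \<Longrightarrow> y \<noteq> y' \<Longrightarrow> hidden_energy y0 m \<theta> y \<le> - T"
proof (cases c0)
  case None
  show thesis
  proof (rule that)
    show "restrict y0 {..<m} \<in> PiE {..<m} Y"
      using y0 by simp
    show "hidden_energy y0 m \<theta> (restrict y0 {..<m}) = \<theta> None + (if c0 = None then 0 else \<theta> c0)"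
      using None by (simp add: hidden_energy_def)
    fix y assume "y \<in> PiE {..<m} Y" "y \<noteq> restrict y0 {..<m}"
    then show "hidden_energy y0 m \<theta> y \<le> - T"
      using \<open>0 \<le> T\<close> None_nonpos Some_gap None by (intro hidden_energy_gap_reference) auto
  qed
next
  case (Some q)
  then obtain j0 b0 where c0_eq: "c0 = Some (j0, b0)" and j0: "j0 < m" "b0 \<in> Y j0" "b0 \<noteq> y0 j0"
    using c0 by (cases q) (auto simp: stat_index_def)
  show thesis
  proof (rule that)
    show "(restrict y0 {..<m})(j0 := b0) \<in> PiE {..<m} Y"
      using y0 j0 by (auto simp: PiE_iff extensional_def)
    have "(\<Sum>j<m. if ((restrict y0 {..<m})(j0 := b0)) j \<noteq> y0 j
        then \<theta> (Some (j, ((restrict y0 {..<m})(j0 := b0)) j)) else 0) = (\<Sum>j<m. if j = j0 then \<theta> c0 else 0)"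
      using j0 by (intro sum.cong) (auto simp: c0_eq)
    then show "hidden_energy y0 m \<theta> ((restrict y0 {..<m})(j0 := b0)) = \<theta> None + (if c0 = None then 0 else \<theta> c0)"
      using j0 c0_eq by (simp add: hidden_energy_def)
    fix y assume "y \<in> PiE {..<m} Y" "y \<noteq> (restrict y0 {..<m})(j0 := b0)"
    then show "hidden_energy y0 m \<theta> y \<le> - T"
      using \<open>0 \<le> T\<close> j0 selected_nonpos None_gap Some_gap c0_eq
      by (intro hidden_energy_gap_unit) auto
  qed
qed

lemma sum_exp_near_dominant_term:
  assumes "finite P" and "y' \<in> P" and "\<And>y. y \<in> P \<Longrightarrow> y \<noteq> y' \<Longrightarrow> E y \<le> - T"
  shows "\<bar>(\<Sum>y\<in>P. exp (E y)) - exp (E y')\<bar> \<le> card P * exp (- T)"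
proof -
  have diff: "(\<Sum>y\<in>P. exp (E y)) - exp (E y') = (\<Sum>y\<in>P - {y'}. exp (E y))"
    using assms(1,2) by (simp add: sum_diff1)
  have "(\<Sum>y\<in>P - {y'}. exp (E y)) \<le> (\<Sum>y\<in>P - {y'}. exp (- T))"
    using assms(3) by (intro sum_mono) auto
  also have "\<dots> \<le> card P * exp (- T)"
    using assms(1) by (simp add: card_Diff1_le mult_right_mono)
  finally show ?thesis
    unfolding diff by (simp add: sum_nonneg)
qed

section \<open>Partition models and approximation\<close>

lemma partition_modelE:
  assumes "p \<in> partition_model Bs"
  obtains w where "\<And>A. A \<in> Bs \<Longrightarrow> 0 \<le> w A" and "(\<Sum>A\<in>Bs. w A) = 1"
    and "p = (\<lambda>x. \<Sum>A\<in>Bs. w A * (if x \<in> A then 1 / real (card A) else 0))"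
  using assms that unfolding partition_model_def by auto

lemma partition_model_nonneg: "p \<in> partition_model Bs \<Longrightarrow> 0 \<le> p x"
  by (erule partition_modelE) (auto intro!: sum_nonneg)

lemma partition_model_le_one:
  assumes "p \<in> partition_model Bs"
  shows "p x \<le> 1"
proof -
  obtain w where w: "\<And>A. A \<in> Bs \<Longrightarrow> 0 \<le> w A" "(\<Sum>A\<in>Bs. w A) = 1"
    and p: "p = (\<lambda>x. \<Sum>A\<in>Bs. w A * (if x \<in> A then 1 / real (card A) else 0))"
    using assms by (elim partition_modelE) blast
  have "p x \<le> (\<Sum>A\<in>Bs. w A)"
    unfolding p using w(1) by (intro sum_mono mult_left_le) (auto simp: divide_le_eq_1)
  then show ?thesis using w(2) by simp
qed

lemma partition_model_sum_eq_one:
  assumes "p \<in> partition_model Bs" and "finite S"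
    and "\<And>A. A \<in> Bs \<Longrightarrow> A \<subseteq> S \<and> A \<noteq> {}"
  shows "(\<Sum>x\<in>S. p x) = 1"
proof -
  obtain w where w: "(\<Sum>A\<in>Bs. w A) = 1"
    and p: "p = (\<lambda>x. \<Sum>A\<in>Bs. w A * (if x \<in> A then 1 / real (card A) else 0))"
    using assms(1) by (rule partition_modelE)
  have uniform: "(\<Sum>x\<in>S. if x \<in> A then 1 / real (card A) else 0) = 1" if "A \<in> Bs" for A
  proof -
    have "finite A" "A \<subseteq> S" "A \<noteq> {}"
      using assms(2) assms(3)[OF that] finite_subset by auto
    then show ?thesis
      using assms(2) by (simp add: sum.If_cases Int_absorb1)
  qed
  have "(\<Sum>x\<in>S. p x) = (\<Sum>A\<in>Bs. w A * (\<Sum>x\<in>S. if x \<in> A then 1 / real (card A) else 0))"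
    unfolding p by (subst sum.swap) (simp add: sum_distrib_left)
  also have "\<dots> = 1"
    using w uniform by simp
  finally show ?thesis .
qed

lemma partition_model_cong:
  assumes "p \<in> partition_model Bs" and "\<And>A. A \<in> Bs \<Longrightarrow> x \<in> A \<longleftrightarrow> x' \<in> A"
  shows "p x = p x'"
  using assms by (elim partition_modelE) (auto intro!: sum.cong)

lemma prefix_blocks_subset_nonempty:
  assumes "\<And>i. i < n \<Longrightarrow> x0 i \<in> X i" and "k \<le> n" and "A \<in> prefix_blocks X n k"
  shows "A \<subseteq> PiE {..<n} X \<and> A \<noteq> {}"
proof -
  obtain u where u: "u \<in> PiE {..<k} X" and A: "A = {x \<in> PiE {..<n} X. \<forall>i<k. x i = u i}"
    using assms(3) unfolding prefix_blocks_def by blast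
  have "(\<lambda>i. if i < k then u i else if i < n then x0 i else undefined) \<in> A"
    using u assms(1,2) unfolding A by (auto simp: PiE_iff extensional_def)
  then show ?thesis
    unfolding A by blast
qed

lemma prefix_partition_model_cong:
  assumes "p \<in> partition_model (prefix_blocks X n k)"
    and "x \<in> PiE {..<n} X" and "x' \<in> PiE {..<n} X" and "\<And>i. i < k \<Longrightarrow> x i = x' i"
  shows "p x = p x'"
  using assms(1) by (rule partition_model_cong) (use assms(2-4) in \<open>auto simp: prefix_blocks_def\<close>)

lemma approx_by_imp_convergent_seq:
  assumes "approx_by S U p"
  obtains u where "\<And>N. u N \<in> U" and "\<And>x. x \<in> S \<Longrightarrow> (\<lambda>N. u N x) \<longlonglongrightarrow> p x"
proof -
  have "\<forall>N. \<exists>u\<in>U. \<forall>x\<in>S. \<bar>p x - u x\<bar> < inverse (Suc N)"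
    using assms unfolding approx_by_def by simp
  then obtain u where u: "\<And>N. u N \<in> U"
    and close: "\<And>N x. x \<in> S \<Longrightarrow> \<bar>p x - u N x\<bar> < inverse (Suc N)"
    by metis
  have "(\<lambda>N. u N x) \<longlonglongrightarrow> p x" if "x \<in> S" for x
    by (rule metric_tendsto_imp_tendsto[OF LIMSEQ_inverse_real_of_nat], intro always_eventually allI)
      (use close[OF that] in \<open>simp add: dist_real_def abs_minus_commute less_imp_le\<close>)
  with u show thesis
    by (rule that)
qed

lemma approx_by_normalized:
  assumes "finite S" and "(\<Sum>x\<in>S. p x) = 1" and "approx_by S U p"
  shows "approx_by S ((\<lambda>u x. u x / (\<Sum>x'\<in>S. u x')) ` U) p"
  unfolding approx_by_def
proof (intro allI impI)
  fix \<epsilon> :: real assume "\<epsilon> > 0"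
  obtain u where u: "\<And>N. u N \<in> U" and lim: "\<And>x. x \<in> S \<Longrightarrow> (\<lambda>N. u N x) \<longlonglongrightarrow> p x"
    using approx_by_imp_convergent_seq[OF assms(3)] by blast
  have sum_lim: "(\<lambda>N. \<Sum>x'\<in>S. u N x') \<longlonglongrightarrow> 1"
    using assms(2) tendsto_sum[of S "\<lambda>x' N. u N x'" p, OF lim] by simp
  have normalized_lim: "(\<lambda>N. u N x / (\<Sum>x'\<in>S. u N x')) \<longlonglongrightarrow> p x" if "x \<in> S" for x
    using tendsto_divide[OF lim[OF that] sum_lim] by simp
  have "\<forall>\<^sub>F N in sequentially. \<bar>p x - u N x / (\<Sum>x'\<in>S. u N x')\<bar> < \<epsilon>" if "x \<in> S" for x
    using tendstoD[OF normalized_lim[OF that] \<open>\<epsilon> > 0\<close>] by (simp add: dist_real_def abs_minus_commute)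
  then have "\<forall>\<^sub>F N in sequentially. \<forall>x\<in>S. \<bar>p x - u N x / (\<Sum>x'\<in>S. u N x')\<bar> < \<epsilon>"
    by (intro eventually_ball_finite[OF assms(1)] ballI)
  then obtain N where "\<forall>x\<in>S. \<bar>p x - u N x / (\<Sum>x'\<in>S. u N x')\<bar> < \<epsilon>"
    unfolding eventually_sequentially by blast
  then show "\<exists>q\<in>(\<lambda>u x. u x / (\<Sum>x'\<in>S. u x')) ` U. \<forall>x\<in>S. \<bar>p x - q x\<bar> < \<epsilon>"
    using u[of N] by (intro bexI[of _ "\<lambda>x. u N x / (\<Sum>x'\<in>S. u N x')"]) auto
qed

lemma RBM_eq_normalized:
  "RBM X x0 n Y y0 m = (\<lambda>u x. u x / (\<Sum>x'\<in>PiE {..<n} X. u x')) `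
     range (\<lambda>\<Theta> x. \<Sum>y\<in>PiE {..<m} Y. exp (rbm_energy X x0 n Y y0 m \<Theta> x y))"
  unfolding RBM_def rbm_dist_def[abs_def] by auto

section \<open>One hidden statistic per block\<close>

lemma ln_max_exp_neg_bounds:
  fixes q T :: real
  assumes "0 \<le> q" and "q \<le> 1" and "0 \<le> T"
  shows "- T \<le> ln (max q (exp (- T)))" and "ln (max q (exp (- T))) \<le> 0"
    and "\<bar>exp (ln (max q (exp (- T)))) - q\<bar> \<le> exp (- T)"
proof -
  have pos: "0 < max q (exp (- T))"
    by (simp add: less_max_iff_disj)
  show "- T \<le> ln (max q (exp (- T)))"
    using pos by (subst ln_ge_iff) auto
  show "ln (max q (exp (- T))) \<le> 0"
    using pos assms by simp
  show "\<bar>exp (ln (max q (exp (- T)))) - q\<bar> \<le> exp (- T)"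
    using pos assms(1) by (auto simp: max_def)
qed

definition mismatches :: "nat set \<Rightarrow> (nat \<Rightarrow> 'a) \<Rightarrow> (nat \<Rightarrow> 'a) \<Rightarrow> real" where
  "mismatches I v x = (\<Sum>i\<in>I. if x i \<noteq> v i then 1 else 0)"

lemma mismatches_nonneg: "0 \<le> mismatches I v x"
  unfolding mismatches_def by (intro sum_nonneg) auto

lemma mismatches_le_card: "mismatches I v x \<le> card I"
proof -
  have "mismatches I v x \<le> (\<Sum>i\<in>I. 1)"
    unfolding mismatches_def by (intro sum_mono) auto
  then show ?thesis
    by simp
qed

lemma mismatches_eq_0: "(\<And>i. i \<in> I \<Longrightarrow> x i = v i) \<Longrightarrow> mismatches I v x = 0"
  unfolding mismatches_def by (intro sum.neutral) auto

lemma mismatches_ge_1: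
  assumes "finite I" and "i \<in> I" and "x i \<noteq> v i"
  shows "1 \<le> mismatches I v x"
proof -
  have "(if x i \<noteq> v i then 1 else 0) \<le> mismatches I v x"
    unfolding mismatches_def using assms by (intro member_le_sum) auto
  then show ?thesis
    using assms(3) by simp
qed

locale rbm_state_spaces =
  fixes X :: "nat \<Rightarrow> 'a set" and x0 :: "nat \<Rightarrow> 'a" and n :: nat
    and Y :: "nat \<Rightarrow> 'b set" and y0 :: "nat \<Rightarrow> 'b" and m :: nat
  assumes finite_X: "\<And>i. i < n \<Longrightarrow> finite (X i)" and x0_in_X: "\<And>i. i < n \<Longrightarrow> x0 i \<in> X i"
    and finite_Y: "\<And>j. j < m \<Longrightarrow> finite (Y j)" and y0_in_Y: "\<And>j. j < m \<Longrightarrow> y0 j \<in> Y j"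

context rbm_state_spaces
begin

lemma finite_visible_states: "finite (PiE {..<n} X)"
  using finite_X by (intro finite_PiE) auto

lemma finite_hidden_states: "finite (PiE {..<m} Y)"
  using finite_Y by (intro finite_PiE) auto

lemma prefix_partition_model_sum_eq_one:
  assumes "k \<le> n" and "p \<in> partition_model (prefix_blocks X n k)"
  shows "(\<Sum>x\<in>PiE {..<n} X. p x) = 1"
  using partition_model_sum_eq_one[OF assms(2) finite_visible_states]
    prefix_blocks_subset_nonempty[where X = X and n = n, OF x0_in_X assms(1)] by blast

lemma blocks_inject_into_hidden_stats:
  assumes "1 \<le> k" and "k \<le> n"
    and "1 + (\<Sum>j<m. (real (card (Y j)) - 1))
           \<ge> (\<Prod>i<k. real (card (X i))) / real (Max ((\<lambda>j. card (X j)) ` {..<k}))"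
  obtains l \<sigma> where "l < k" and "\<sigma> ` PiE ({..<k} - {l}) X \<subseteq> stat_index Y y0 m"
    and "inj_on \<sigma> (PiE ({..<k} - {l}) X)"
proof -
  have "Max ((\<lambda>j. card (X j)) ` {..<k}) \<in> (\<lambda>j. card (X j)) ` {..<k}"
    using assms(1) by (intro Max_in) (auto simp: lessThan_empty_iff)
  then obtain l where l: "l < k" and l_max: "Max ((\<lambda>j. card (X j)) ` {..<k}) = card (X l)"
    by auto
  have "card (X l) > 0"
    using finite_X[of l] x0_in_X[of l] l assms(2) by (auto simp: card_gt_0_iff)
  have "(\<Prod>i<k. real (card (X i))) = card (X l) * (\<Prod>i\<in>{..<k} - {l}. real (card (X i)))"
    using l by (subst prod.remove[of _ l]) auto
  also have "(\<Prod>i\<in>{..<k} - {l}. real (card (X i))) = card (PiE ({..<k} - {l}) X)"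
    by (simp add: card_PiE)
  finally have "real (card (PiE ({..<k} - {l}) X)) \<le> real (card (stat_index Y y0 m))"
    using assms(3) l_max \<open>card (X l) > 0\<close> card_stat_index(2)[OF finite_Y y0_in_Y] by simp
  then have card_le: "card (PiE ({..<k} - {l}) X) \<le> card (stat_index Y y0 m)"
    by simp
  have "finite (PiE ({..<k} - {l}) X)"
    using finite_X assms(2) by (intro finite_PiE) auto
  then obtain \<sigma> where "\<sigma> ` PiE ({..<k} - {l}) X \<subseteq> stat_index Y y0 m"
    and "inj_on \<sigma> (PiE ({..<k} - {l}) X)"
    using card_le_inj[OF _ card_stat_index(1)[OF finite_Y y0_in_Y] card_le] by blast
  with l show thesis
    by (rule that)
qed

end

locale rbm_block_selection = rbm_state_spaces X x0 n Y y0 m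
  for X :: "nat \<Rightarrow> 'a set" and x0 n and Y :: "nat \<Rightarrow> 'b set" and y0 m +
  fixes I :: "nat set" and l :: nat and \<sigma> :: "(nat \<Rightarrow> 'a) \<Rightarrow> (nat \<times> 'b) option"
    and p :: "(nat \<Rightarrow> 'a) \<Rightarrow> real" and T :: real
  assumes I_subset: "I \<subseteq> {..<n}" and l_less: "l < n"
    and \<sigma>_into: "\<sigma> ` PiE I X \<subseteq> stat_index Y y0 m" and \<sigma>_inj: "inj_on \<sigma> (PiE I X)"
    and p_nonneg: "\<And>x. 0 \<le> p x" and p_le_one: "\<And>x. p x \<le> 1"
    and p_local: "\<And>x x'. x \<in> PiE {..<n} X \<Longrightarrow> x' \<in> PiE {..<n} X \<Longrightarrow>
        (\<And>i. i \<in> insert l I \<Longrightarrow> x i = x' i) \<Longrightarrow> p x = p x'"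
    and T_nonneg: "0 \<le> T"
begin

definition clipped_log :: "(nat \<Rightarrow> 'a) \<Rightarrow> real" where
  "clipped_log x = ln (max (p x) (exp (- T)))"

definition extend :: "(nat \<Rightarrow> 'a) \<Rightarrow> 'a \<Rightarrow> nat \<Rightarrow> 'a" where
  "extend v b = (\<lambda>i. if i \<in> I then v i else if i = l then b else if i < n then x0 i else undefined)"

definition block_of :: "(nat \<times> 'b) option \<Rightarrow> nat \<Rightarrow> 'a" where
  "block_of c = the_inv_into (PiE I X) \<sigma> c"

definition weight :: "(nat \<times> 'b) option \<Rightarrow> real" where
  "weight c = (if c = None then 1 else real (card I) + 2)"

definition unit_energy :: "(nat \<times> 'b) option \<Rightarrow> (nat \<Rightarrow> 'a) \<Rightarrow> real" where
  "unit_energy c x = (if c \<in> \<sigma> ` PiE I X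
     then clipped_log (extend (block_of c) (x l)) - weight c * T * mismatches I (block_of c) x
     else - weight c * T)"

text \<open>With these columns, the hidden state switching on the statistic c alone (the reference
  state if c = None) has energy unit_energy c x.\<close>
definition energy_column :: "(nat \<times> 'b) option \<Rightarrow> (nat \<Rightarrow> 'a) \<Rightarrow> real" where
  "energy_column c x = (if c = None then unit_energy None x else unit_energy c x - unit_energy None x)"

lemma finite_I: "finite I"
  using I_subset finite_subset by blast

lemma weight_ge_1: "1 \<le> weight c"
  by (simp add: weight_def)

lemma clipped_log_bounds: "- T \<le> clipped_log x" "clipped_log x \<le> 0"
  unfolding clipped_log_def using ln_max_exp_neg_bounds p_nonneg p_le_one T_nonneg by auto

lemma coord_additive_unit_energy: "coord_additive n X (unit_energy c)"
proof (cases "c \<in> \<sigma> ` PiE I X")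
  case True
  have "coord_additive n X (\<lambda>x. clipped_log (extend (block_of c) (x l))
      - (\<Sum>i\<in>I. weight c * T * (if x i \<noteq> block_of c i then 1 else 0)))"
    using l_less I_subset by (intro coord_additive_diff coord_additive_coord coord_additive_sum)
  moreover have "unit_energy c = (\<lambda>x. clipped_log (extend (block_of c) (x l))
      - (\<Sum>i\<in>I. weight c * T * (if x i \<noteq> block_of c i then 1 else 0)))"
    using True by (simp add: fun_eq_iff unit_energy_def mismatches_def sum_distrib_left)
  ultimately show ?thesis
    by simp
next
  case False
  then have "unit_energy c = (\<lambda>x. - weight c * T)"
    by (simp add: fun_eq_iff unit_energy_def)
  then show ?thesis
    by (simp add: coord_additive_const)
qed

lemma coord_additive_energy_column: "coord_additive n X (energy_column c)"
proof (cases "c = None")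
  case True
  then have "energy_column c = unit_energy None"
    by (simp add: fun_eq_iff energy_column_def)
  then show ?thesis
    by (simp add: coord_additive_unit_energy)
next
  case False
  have "energy_column c = (\<lambda>x. unit_energy c x - unit_energy None x)"
    by (simp add: fun_eq_iff energy_column_def False)
  then show ?thesis
    by (simp add: coord_additive_diff coord_additive_unit_energy)
qed

lemma unit_energy_nonpos: "unit_energy c x \<le> 0"
proof (cases "c \<in> \<sigma> ` PiE I X")
  case True
  have "0 \<le> weight c * T * mismatches I (block_of c) x"
    using weight_ge_1[of c] T_nonneg mismatches_nonneg by (intro mult_nonneg_nonneg) auto
  then show ?thesis
    using True clipped_log_bounds(2)[of "extend (block_of c) (x l)"] by (simp add: unit_energy_def)
next
  case False
  then show ?thesis
    using weight_ge_1[of c] T_nonneg by (simp add: unit_energy_def)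
qed

lemma unit_energy_None_lower: "- (real (card I) + 1) * T \<le> unit_energy None x"
proof (cases "None \<in> \<sigma> ` PiE I X")
  case True
  have "T * mismatches I (block_of None) x \<le> T * card I"
    using mismatches_le_card T_nonneg by (intro mult_left_mono)
  then show ?thesis
    using True clipped_log_bounds(1)[of "extend (block_of None) (x l)"]
    by (simp add: unit_energy_def weight_def algebra_simps)
next
  case False
  moreover have "0 \<le> real (card I) * T"
    using T_nonneg by simp
  ultimately show ?thesis
    by (simp add: unit_energy_def weight_def algebra_simps)
qed

lemma restrict_in_blocks: "x \<in> PiE {..<n} X \<Longrightarrow> restrict x I \<in> PiE I X"
  using I_subset by auto

lemma block_of_selected: "v \<in> PiE I X \<Longrightarrow> block_of (\<sigma> v) = v"
  unfolding block_of_def using \<sigma>_inj by (rule the_inv_into_f_f)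

lemma selected_unit_energy:
  assumes x: "x \<in> PiE {..<n} X"
  shows "unit_energy (\<sigma> (restrict x I)) x = clipped_log x"
proof -
  define v where "v = restrict x I"
  have v: "v \<in> PiE I X" and "block_of (\<sigma> v) = v"
    using restrict_in_blocks[OF x] block_of_selected by (simp_all add: v_def)
  moreover have "mismatches I v x = 0"
    by (rule mismatches_eq_0) (simp add: v_def)
  moreover have "p (extend v (x l)) = p x"
  proof (rule p_local[OF _ x])
    show "extend v (x l) \<in> PiE {..<n} X"
      using v x l_less I_subset x0_in_X by (auto simp: extend_def PiE_iff extensional_def)
  qed (auto simp: extend_def v_def)
  ultimately show ?thesis
    by (simp add: unit_energy_def clipped_log_def v_def)
qed

lemma unselected_unit_energy:
  assumes x: "x \<in> PiE {..<n} X" and c: "c \<noteq> \<sigma> (restrict x I)"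
  shows "unit_energy c x \<le> - weight c * T"
proof (cases "c \<in> \<sigma> ` PiE I X")
  case True
  then obtain v where v: "v \<in> PiE I X" and c_eq: "c = \<sigma> v"
    by blast
  have "v \<noteq> restrict x I"
    using c c_eq by blast
  then obtain i where i: "i \<in> I" "x i \<noteq> v i"
    using v restrict_in_blocks[OF x] by (metis PiE_ext restrict_apply')
  have "weight c * T * 1 \<le> weight c * T * mismatches I v x"
    using mismatches_ge_1[of I i x v] finite_I i weight_ge_1[of c] T_nonneg by (intro mult_left_mono) auto
  then show ?thesis
    using True clipped_log_bounds(2)[of "extend v (x l)"]
    by (simp add: unit_energy_def c_eq block_of_selected[OF v])
next
  case False
  then show ?thesis
    by (simp add: unit_energy_def)
qed

lemma energy_column_selected:
  assumes "x \<in> PiE {..<n} X" and "c0 = \<sigma> (restrict x I)"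
  shows "energy_column None x + (if c0 = None then 0 else energy_column c0 x) = clipped_log x"
proof -
  have c0_energy: "unit_energy c0 x = clipped_log x"
    using selected_unit_energy[OF assms(1)] assms(2) by simp
  show ?thesis
  proof (cases "c0 = None")
    case True
    then show ?thesis
      using c0_energy by (simp add: energy_column_def)
  next
    case False
    show ?thesis
      using c0_energy by (simp add: energy_column_def False)
  qed
qed

text \<open>The weight card I + 2 beats the lower bound - (card I + 1) * T of unit_energy None.\<close>
lemma energy_column_unselected:
  assumes "x \<in> PiE {..<n} X" and "c \<noteq> None" and "c \<noteq> \<sigma> (restrict x I)"
  shows "energy_column c x \<le> - T"
proof -
  have "unit_energy c x \<le> - (real (card I) + 2) * T"
    using unselected_unit_energy[OF assms(1,3)] by (simp add: weight_def assms(2))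
  then show ?thesis
    using unit_energy_None_lower[of x] by (simp add: energy_column_def assms(2) algebra_simps)
qed

lemma energy_column_None_unselected:
  assumes "x \<in> PiE {..<n} X" and "\<sigma> (restrict x I) \<noteq> None"
  shows "energy_column None x \<le> - T"
  using unselected_unit_energy[OF assms(1), of None] assms(2)[symmetric]
  by (simp add: energy_column_def weight_def)

lemma hidden_energy_selects:
  assumes x: "x \<in> PiE {..<n} X"
  obtains y' where "y' \<in> PiE {..<m} Y"
    and "hidden_energy y0 m (\<lambda>c. energy_column c x) y' = clipped_log x"
    and "\<And>y. y \<in> PiE {..<m} Y \<Longrightarrow> y \<noteq> y' \<Longrightarrow> hidden_energy y0 m (\<lambda>c. energy_column c x) y \<le> - T"
proof -
  define c0 where "c0 = \<sigma> (restrict x I)"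
  have c0: "c0 \<in> stat_index Y y0 m"
    using \<sigma>_into restrict_in_blocks[OF x] by (auto simp: c0_def)
  note selected = energy_column_selected[OF x c0_def]
  have None_nonpos: "energy_column None x \<le> 0"
    using unit_energy_nonpos by (simp add: energy_column_def)
  have selected_nonpos: "energy_column None x + (if c0 = None then 0 else energy_column c0 x) \<le> 0"
    using selected clipped_log_bounds(2) by simp
  have None_gap: "c0 \<noteq> None \<Longrightarrow> energy_column None x \<le> - T"
    using energy_column_None_unselected[OF x] by (simp add: c0_def)
  have Some_gap: "\<And>c. c \<in> stat_index Y y0 m \<Longrightarrow> c \<noteq> None \<Longrightarrow> c \<noteq> c0 \<Longrightarrow> energy_column c x \<le> - T"
    using energy_column_unselected[OF x] by (simp add: c0_def)
  show thesis
  proof (rule hidden_energy_gap[OF y0_in_Y c0 T_nonneg None_nonpos selected_nonpos None_gap Some_gap])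
    fix y' assume "y' \<in> PiE {..<m} Y"
      and "hidden_energy y0 m (\<lambda>c. energy_column c x) y'
        = energy_column None x + (if c0 = None then 0 else energy_column c0 x)"
      and "\<And>y. y \<in> PiE {..<m} Y \<Longrightarrow> y \<noteq> y' \<Longrightarrow> hidden_energy y0 m (\<lambda>c. energy_column c x) y \<le> - T"
    then show thesis
      using selected by (intro that[of y']) simp_all
  qed
qed

lemma unnormalized_rbm_close:
  obtains \<Theta> where "\<And>x. x \<in> PiE {..<n} X \<Longrightarrow>
    \<bar>(\<Sum>y\<in>PiE {..<m} Y. exp (rbm_energy X x0 n Y y0 m \<Theta> x y)) - p x\<bar>
      \<le> (1 + card (PiE {..<m} Y)) * exp (- T)"
proof (rule rbm_energy_from_columns[where ?x0.0 = x0 and ?y0.0 = y0 and \<theta> = energy_column,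
      OF finite_X finite_Y coord_additive_energy_column])
  fix \<Theta>
  assume \<Theta>: "\<And>x y. x \<in> PiE {..<n} X \<Longrightarrow> y \<in> PiE {..<m} Y \<Longrightarrow>
      rbm_energy X x0 n Y y0 m \<Theta> x y = hidden_energy y0 m (\<lambda>c. energy_column c x) y"
  show thesis
  proof (rule that)
    fix x assume x: "x \<in> PiE {..<n} X"
    show "\<bar>(\<Sum>y\<in>PiE {..<m} Y. exp (rbm_energy X x0 n Y y0 m \<Theta> x y)) - p x\<bar>
      \<le> (1 + card (PiE {..<m} Y)) * exp (- T)"
    proof (rule hidden_energy_selects[OF x])
      fix y' assume "y' \<in> PiE {..<m} Y"
        and "hidden_energy y0 m (\<lambda>c. energy_column c x) y' = clipped_log x"
        and "\<And>y. y \<in> PiE {..<m} Y \<Longrightarrow> y \<noteq> y' \<Longrightarrow> hidden_energy y0 m (\<lambda>c. energy_column c x) y \<le> - T"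
      then have "\<bar>(\<Sum>y\<in>PiE {..<m} Y. exp (rbm_energy X x0 n Y y0 m \<Theta> x y)) - exp (clipped_log x)\<bar>
          \<le> card (PiE {..<m} Y) * exp (- T)"
        using sum_exp_near_dominant_term[of "PiE {..<m} Y" y' "rbm_energy X x0 n Y y0 m \<Theta> x" T]
          finite_hidden_states \<Theta>[OF x] by simp
      moreover have "\<bar>exp (clipped_log x) - p x\<bar> \<le> exp (- T)"
        unfolding clipped_log_def using ln_max_exp_neg_bounds(3) p_nonneg p_le_one T_nonneg by blast
      ultimately show ?thesis
        by (simp add: algebra_simps abs_le_iff)
    qed
  qed
qed

end

context rbm_state_spaces
begin

lemma approx_by_unnormalized_rbm:
  assumes "I \<subseteq> {..<n}" and "l < n"
    and "\<sigma> ` PiE I X \<subseteq> stat_index Y y0 m" and "inj_on \<sigma> (PiE I X)"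
    and "\<And>x. 0 \<le> p x" and "\<And>x. p x \<le> 1"
    and "\<And>x x'. x \<in> PiE {..<n} X \<Longrightarrow> x' \<in> PiE {..<n} X \<Longrightarrow>
        (\<And>i. i \<in> insert l I \<Longrightarrow> x i = x' i) \<Longrightarrow> p x = p x'"
  shows "approx_by (PiE {..<n} X)
    (range (\<lambda>\<Theta> x. \<Sum>y\<in>PiE {..<m} Y. exp (rbm_energy X x0 n Y y0 m \<Theta> x y))) p"
  unfolding approx_by_def
proof (intro allI impI)
  fix \<epsilon> :: real assume "\<epsilon> > 0"
  define C where "C = 1 + real (card (PiE {..<m} Y))"
  define T where "T = \<bar>ln (C / \<epsilon>)\<bar> + 1"
  have "0 \<le> T"
    by (simp add: T_def)
  have "C > 0"
    by (simp add: C_def add_pos_nonneg)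
  have "C / \<epsilon> = exp (ln (C / \<epsilon>))"
    using \<open>C > 0\<close> \<open>\<epsilon> > 0\<close> by simp
  also have "\<dots> < exp T"
    by (simp add: T_def)
  finally have error: "C * exp (- T) < \<epsilon>"
    using \<open>\<epsilon> > 0\<close> by (simp add: exp_minus field_simps)
  interpret rbm_block_selection X x0 n Y y0 m I l \<sigma> p T
    by unfold_locales (fact assms \<open>0 \<le> T\<close>)+
  show "\<exists>q\<in>range (\<lambda>\<Theta> x. \<Sum>y\<in>PiE {..<m} Y. exp (rbm_energy X x0 n Y y0 m \<Theta> x y)).
      \<forall>x\<in>PiE {..<n} X. \<bar>p x - q x\<bar> < \<epsilon>"
  proof (rule unnormalized_rbm_close)
    fix \<Theta> assume \<Theta>: "\<And>x. x \<in> PiE {..<n} X \<Longrightarrow>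
      \<bar>(\<Sum>y\<in>PiE {..<m} Y. exp (rbm_energy X x0 n Y y0 m \<Theta> x y)) - p x\<bar>
        \<le> (1 + card (PiE {..<m} Y)) * exp (- T)"
    have "\<bar>p x - (\<Sum>y\<in>PiE {..<m} Y. exp (rbm_energy X x0 n Y y0 m \<Theta> x y))\<bar> < \<epsilon>"
      if "x \<in> PiE {..<n} X" for x
      using \<Theta>[OF that] error by (simp add: abs_minus_commute C_def)
    then show ?thesis
      by (intro bexI[where x = "\<lambda>x. \<Sum>y\<in>PiE {..<m} Y. exp (rbm_energy X x0 n Y y0 m \<Theta> x y)"]) auto
  qed
qed

end

theorem corollary1:
  fixes X :: "nat \<Rightarrow> 'a set" and x0 :: "nat \<Rightarrow> 'a" and n :: nat
    and Y :: "nat \<Rightarrow> 'b set" and y0 :: "nat \<Rightarrow> 'b" and m :: nat and k :: nat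
  assumes "\<And>i. i < n \<Longrightarrow> finite (X i)" and "\<And>i. i < n \<Longrightarrow> x0 i \<in> X i"
    and "\<And>j. j < m \<Longrightarrow> finite (Y j)" and "\<And>j. j < m \<Longrightarrow> y0 j \<in> Y j"
    and "1 \<le> k" and "k \<le> n"
    and "1 + (\<Sum>j<m. (real (card (Y j)) - 1))
           \<ge> (\<Prod>i<k. real (card (X i))) / real (Max ((\<lambda>j. card (X j)) ` {..<k}))"
  shows "\<forall>p\<in>partition_model (prefix_blocks X n k).
           approx_by (PiE {..<n} X) (RBM X x0 n Y y0 m) p"
proof
  fix p assume p: "p \<in> partition_model (prefix_blocks X n k)"
  interpret rbm_state_spaces X x0 n Y y0 m
    by unfold_locales (fact assms)+
  obtain l \<sigma> where l: "l < k" and \<sigma>: "\<sigma> ` PiE ({..<k} - {l}) X \<subseteq> stat_index Y y0 m"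
    "inj_on \<sigma> (PiE ({..<k} - {l}) X)"
    using blocks_inject_into_hidden_stats[OF assms(5-7)] by blast
  have "approx_by (PiE {..<n} X)
      (range (\<lambda>\<Theta> x. \<Sum>y\<in>PiE {..<m} Y. exp (rbm_energy X x0 n Y y0 m \<Theta> x y))) p"
  proof (rule approx_by_unnormalized_rbm[OF _ _ \<sigma>])
    show "{..<k} - {l} \<subseteq> {..<n}" "l < n"
      using l assms(6) by auto
    show "p x = p x'" if "x \<in> PiE {..<n} X" "x' \<in> PiE {..<n} X"
      and "\<And>i. i \<in> insert l ({..<k} - {l}) \<Longrightarrow> x i = x' i" for x x'
      using that l by (intro prefix_partition_model_cong[OF p]) auto
  qed (simp_all add: partition_model_nonneg[OF p] partition_model_le_one[OF p])
  then have "approx_by (PiE {..<n} X) ((\<lambda>u x. u x / (\<Sum>x'\<in>PiE {..<n} X. u x')) `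
      range (\<lambda>\<Theta> x. \<Sum>y\<in>PiE {..<m} Y. exp (rbm_energy X x0 n Y y0 m \<Theta> x y))) p"
    by (intro approx_by_normalized finite_visible_states prefix_partition_model_sum_eq_one[OF assms(6) p])
  then show "approx_by (PiE {..<n} X) (RBM X x0 n Y y0 m) p"
    by (simp only: RBM_eq_normalized)
qed

end
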